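(* Assume the van Kampen setup below with $B_k=X_k$ for $k=0,1,2$ (so $B=X$), and let $P_k:\vec\pi_1(X_k)\to\vec\pi_1(X_k,A_k)$, $k=0,1,2$, be compatible future retracts. Let $a,a'\in A$ and let $[\gamma]:a\to a'$ be a morphism of $\vec\pi_1(X,A)$. Then there exist $n\ge 1$, points $a=y_0,y_1,\dots,y_n=a'$ of $A$, indices $k_1,\dots,k_n\in\{1,2\}$ and morphisms $\alpha_i:y_{i-1}\to y_i$ of $\vec\pi_1(X_{k_i},A_{k_i})$ such that $[\gamma]=\alpha_n\circ\dots\circ\alpha_1$ in $\vec\pi_1(X)$ (where each $\alpha_i$ is regarded in $\vec\pi_1(X)$ via the functor induced by the inclusion $X_{k_i}\subseteq X$).
   Context: A d-space is a topological space with a set of continuous paths $[0,1]\to X$ (dipaths) containing all constant paths, closed under precomposition with continuous non-decreasing maps $[0,1]\to[0,1]$ and under concatenation; subsets carry the dipaths with image in them; a dimap is a continuous map preserving dipaths. $\vec I$ is $[0,1]$ with non-decreasing paths as dipaths. The fundamental category $\vec\pi_1(X)$ has objects the points of $X$ and morphisms $a\to b$ the classes of dipaths from $a$ to $b$ modulo the equivalence relation generated by endpoint-fixing directed homotopies (dimaps $H:\vec I\times\vec I\to X$ with $H(\cdot,0)=\gamma$, $H(\cdot,1)=\gamma'$, $H(0,s)=a$, $H(1,s)=b$); composition is concatenation. For $A\subseteq X$, $\vec\pi_1(X,A)$ is the full subcategory on objects in $A$. Inclusions of d-spaces induce functors between these categories. For $A\subseteq B\subseteq X$ with inclusion $\iota:\vec\pi_1(X,A)\to\vec\pi_1(X,B)$,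 a future retract is a functor $P:\vec\pi_1(X,B)\to\vec\pi_1(X,A)$ left adjoint to $\iota$ whose unit $\eta$ satisfies $\eta_a=\mathrm{id}_a$ for $a\in A$. Van Kampen setup: $X$ is a d-space, $X_1,X_2\subseteq X$ with $X=\mathrm{Int}(X_1)\cup\mathrm{Int}(X_2)$, the dipaths of $X$ are the finite concatenations of dipaths of $X_1$ and of $X_2$, and $X_0=X_1\cap X_2$. For $k=0,1,2$, $A_k\subseteq B_k\subseteq X_k$, with $A_0=A_1\cap A_2$, $B_0=B_1\cap B_2$, $A=A_1\cup A_2$, $B=B_1\cup B_2$, $A=\mathrm{Int}_A(A_1)\cup\mathrm{Int}_A(A_2)$, $B=\mathrm{Int}_B(B_1)\cup\mathrm{Int}_B(B_2)$. Inclusions induce functors $i_k:\vec\pi_1(X_0,B_0)\to\vec\pi_1(X_k,B_k)$ and $i'_k:\vec\pi_1(X_0,A_0)\to\vec\pi_1(X_k,A_k)$ for $k=1,2$. Functors $P_k:\vec\pi_1(X_k,B_k)\to\vec\pi_1(X_k,A_k)$, $k=0,1,2$, are compatible future retracts if each $P_k$ is a future retract with unit $\eta^k$, $P_k\circ i_k=i'_k\circ P_0$ for $k=1,2$, and for every $x\in B_0$ the image of $\eta^0_x$ under the functor $\vec\pi_1(X_0)\to\vec\pi_1(X_k)$ equals $\eta^k_x$ ($k=1,2$). *)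

theory Defs
  imports "HOL-Analysis.Analysis"
begin

text \<open>Paths are functions real => 'a; only their values on [0,1] matter
  (d-spaces are required to be invariant under changing a path outside [0,1]).\<close>

definition dcat :: "(real \<Rightarrow> 'a) \<Rightarrow> (real \<Rightarrow> 'a) \<Rightarrow> real \<Rightarrow> 'a" where
  "dcat g h = (\<lambda>t. if t \<le> 1/2 then g (2 * t) else h (2 * t - 1))"

fun dcatl :: "(real \<Rightarrow> 'a) list \<Rightarrow> real \<Rightarrow> 'a" where
  "dcatl [] = undefined"
| "dcatl [g] = g"
| "dcatl (g # gs) = dcat g (dcatl gs)"

definition reparam :: "(real \<Rightarrow> real) \<Rightarrow> bool" where
  "reparam \<phi> \<longleftrightarrow> continuous_on {0..1} \<phi> \<and> \<phi> ` {0..1} \<subseteq> {0..1} \<and> mono_on {0..1} \<phi>"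

definition dspace :: "'a topology \<Rightarrow> (real \<Rightarrow> 'a) set \<Rightarrow> bool" where
  "dspace T D \<longleftrightarrow>
     (\<forall>g\<in>D. pathin T g)
   \<and> (\<forall>x\<in>topspace T. (\<lambda>_. x) \<in> D)
   \<and> (\<forall>g\<in>D. \<forall>\<phi>. reparam \<phi> \<longrightarrow> g \<circ> \<phi> \<in> D)
   \<and> (\<forall>g\<in>D. \<forall>h\<in>D. g 1 = h 0 \<longrightarrow> dcat g h \<in> D)
   \<and> (\<forall>g h. (\<forall>t\<in>{0..1}. g t = h t) \<longrightarrow> (g \<in> D \<longleftrightarrow> h \<in> D))"

definition subdi :: "(real \<Rightarrow> 'a) set \<Rightarrow> 'a set \<Rightarrow> (real \<Rightarrow> 'a) set" where
  "subdi D S = {g \<in> D. g ` {0..1} \<subseteq> S}"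

text \<open>One endpoint-fixing directed homotopy from g to g' in the d-space (T,D):
  a dimap from the product d-space (directed unit interval squared).\<close>
definition dhrel :: "'a topology \<Rightarrow> (real \<Rightarrow> 'a) set \<Rightarrow> (real \<Rightarrow> 'a) \<Rightarrow> (real \<Rightarrow> 'a) \<Rightarrow> bool" where
  "dhrel T D g g' \<longleftrightarrow> g \<in> D \<and> g' \<in> D \<and>
     (\<exists>H :: real \<times> real \<Rightarrow> 'a.
        continuous_map (top_of_set ({0..1} \<times> {0..1})) T H
      \<and> (\<forall>p q. reparam p \<and> reparam q \<longrightarrow> (\<lambda>t. H (p t, q t)) \<in> D)
      \<and> (\<forall>t\<in>{0..1}. H (t, 0) = g t \<and> H (t, 1) = g' t)
      \<and> (\<forall>s\<in>{0..1}. H (0, s) = g 0 \<and> H (1, s) = g 1))"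

definition dheq :: "'a topology \<Rightarrow> (real \<Rightarrow> 'a) set \<Rightarrow> (real \<Rightarrow> 'a) \<Rightarrow> (real \<Rightarrow> 'a) \<Rightarrow> bool" where
  "dheq T D g h \<longleftrightarrow> g \<in> D \<and> h \<in> D \<and> equivclp (dhrel T D) g h"

definition dcls :: "'a topology \<Rightarrow> (real \<Rightarrow> 'a) set \<Rightarrow> (real \<Rightarrow> 'a) \<Rightarrow> (real \<Rightarrow> 'a) set" where
  "dcls T D g = {h. dheq T D g h}"

definition homs :: "'a topology \<Rightarrow> (real \<Rightarrow> 'a) set \<Rightarrow> 'a \<Rightarrow> 'a \<Rightarrow> (real \<Rightarrow> 'a) set set" where
  "homs T D a b = {dcls T D g | g. g \<in> D \<and> g 0 = a \<and> g 1 = b}"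

definition idm :: "'a topology \<Rightarrow> (real \<Rightarrow> 'a) set \<Rightarrow> 'a \<Rightarrow> (real \<Rightarrow> 'a) set" where
  "idm T D a = dcls T D (\<lambda>_. a)"

text \<open>Composition: cmp T D beta alpha = beta o alpha (alpha first), via concatenation.\<close>
definition cmp :: "'a topology \<Rightarrow> (real \<Rightarrow> 'a) set \<Rightarrow> (real \<Rightarrow> 'a) set \<Rightarrow> (real \<Rightarrow> 'a) set \<Rightarrow> (real \<Rightarrow> 'a) set" where
  "cmp T D \<beta> \<alpha> = dcls T D (dcat (SOME g. g \<in> \<alpha>) (SOME h. h \<in> \<beta>))"

text \<open>Functor induced by an inclusion of d-spaces (T,D) into (T',D') on morphisms.\<close>
definition incl :: "'a topology \<Rightarrow> (real \<Rightarrow> 'a) set \<Rightarrow> (real \<Rightarrow> 'a) set \<Rightarrow> (real \<Rightarrow> 'a) set" where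
  "incl T' D' \<alpha> = dcls T' D' (SOME g. g \<in> \<alpha>)"

text \<open>Future retract P (object part Po, morphism part Pm) from the fundamental category
  of the d-space (T,D) onto its full subcategory on A, with unit eta:
  P is a functor, eta is natural, eta_x is universal from x to the inclusion, and
  eta_a = id_a for a in A.\<close>
definition future_retract ::
  "'a topology \<Rightarrow> (real \<Rightarrow> 'a) set \<Rightarrow> 'a set \<Rightarrow> ('a \<Rightarrow> 'a)
   \<Rightarrow> ((real \<Rightarrow> 'a) set \<Rightarrow> (real \<Rightarrow> 'a) set) \<Rightarrow> ('a \<Rightarrow> (real \<Rightarrow> 'a) set) \<Rightarrow> bool" where
  "future_retract T D A Po Pm \<eta> \<longleftrightarrow>
     (\<forall>x\<in>topspace T. Po x \<in> A)
   \<and> (\<forall>x\<in>topspace T. \<forall>y\<in>topspace T. \<forall>f\<in>homs T D x y. Pm f \<in> homs T D (Po x) (Po y))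
   \<and> (\<forall>x\<in>topspace T. Pm (idm T D x) = idm T D (Po x))
   \<and> (\<forall>x\<in>topspace T. \<forall>y\<in>topspace T. \<forall>z\<in>topspace T. \<forall>f\<in>homs T D x y. \<forall>g\<in>homs T D y z.
        Pm (cmp T D g f) = cmp T D (Pm g) (Pm f))
   \<and> (\<forall>x\<in>topspace T. \<eta> x \<in> homs T D x (Po x))
   \<and> (\<forall>x\<in>topspace T. \<forall>y\<in>topspace T. \<forall>f\<in>homs T D x y.
        cmp T D (Pm f) (\<eta> x) = cmp T D (\<eta> y) f)
   \<and> (\<forall>x\<in>topspace T. \<forall>a\<in>A. \<forall>f\<in>homs T D x a.
        \<exists>!g. g \<in> homs T D (Po x) a \<and> cmp T D g (\<eta> x) = f)
   \<and> (\<forall>a\<in>A. \<eta> a = idm T D a)"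

text \<open>Dipaths of X are the finite concatenations of dipaths of X1 and of X2
  (concatenation along a subdivision 0 = t_0 < ... < t_n = 1).\<close>
definition fin_concats :: "(real \<Rightarrow> 'a) set \<Rightarrow> (real \<Rightarrow> 'a) set" where
  "fin_concats E = {g. \<exists>n::nat. \<exists>t::nat \<Rightarrow> real. n \<ge> 1 \<and> t 0 = 0 \<and> t n = 1
      \<and> (\<forall>i<n. t i < t (Suc i))
      \<and> (\<forall>i<n. (\<lambda>s. g (t i + s * (t (Suc i) - t i))) \<in> E)}"

end

theory Submission
  imports Defs
begin

text \<open>
  Since X is generated by X1 and X2, gamma subdivides into pieces c_1, ..., c_n each
  lying in X1 or X2.  For every x choose a dipath E x representing the unit eta_x from x to
  P x (taken from eta^0 on X0, which by compatibility of the units represents eta^1 and eta^2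
  as well).  Naturality of the unit of the relevant retract at [c_i] gives a dipath delta_i in
  X_k from P(c_i 0) to P(c_i 1) with (E c_i(0)) delta_i ~ c_i (E c_i(1)).  Pasting these
  squares telescopes to (E a) delta_1 ... delta_n ~ gamma (E a'), and at points of A the
  unit is the identity, so gamma ~ delta_1 ... delta_n.
\<close>

lemma reparamI:
  assumes "continuous_on {0..1} \<phi>" "\<And>t. t \<in> {0..1} \<Longrightarrow> \<phi> t \<in> {0..1}"
    "\<And>s t. 0 \<le> s \<Longrightarrow> s \<le> t \<Longrightarrow> t \<le> 1 \<Longrightarrow> \<phi> s \<le> \<phi> t"
  shows "reparam \<phi>"
  using assms unfolding reparam_def by (auto intro!: mono_onI)

lemma reparam_range: "reparam \<phi> \<Longrightarrow> 0 \<le> t \<Longrightarrow> t \<le> 1 \<Longrightarrow> 0 \<le> \<phi> t \<and> \<phi> t \<le> 1"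
  unfolding reparam_def image_subset_iff by auto

lemma reparam_mono: "reparam \<phi> \<Longrightarrow> 0 \<le> s \<Longrightarrow> s \<le> t \<Longrightarrow> t \<le> 1 \<Longrightarrow> \<phi> s \<le> \<phi> t"
  unfolding reparam_def by (auto intro: mono_onD)

lemma reparam_cont: "reparam \<phi> \<Longrightarrow> continuous_on {0..1} \<phi>"
  unfolding reparam_def by auto

lemma reparam_id: "reparam (\<lambda>t. t)"
  by (rule reparamI) auto

lemma reparam_affine:
  assumes p: "reparam p" and c: "0 \<le> c"
    and r: "\<And>t. 0 \<le> t \<Longrightarrow> t \<le> 1 \<Longrightarrow> 0 \<le> c * p t + d \<and> c * p t + d \<le> 1"
  shows "reparam (\<lambda>t. c * p t + d)"
proof (rule reparamI)
  show "continuous_on {0..1} (\<lambda>t. c * p t + d)"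
    using reparam_cont[OF p] by (intro continuous_intros)
  show "\<And>s t. 0 \<le> s \<Longrightarrow> s \<le> t \<Longrightarrow> t \<le> 1 \<Longrightarrow> c * p s + d \<le> c * p t + d"
    using reparam_mono[OF p] c by (simp add: mult_left_mono)
qed (use r in auto)

lemma reparam_restrict:
  assumes p: "reparam p" and ab: "0 \<le> a" "a \<le> b" "b \<le> 1"
  shows "reparam (\<lambda>u. p (a + (b - a) * u))"
proof (rule reparamI)
  have m: "a + (b - a) * u \<in> {0..1}" if "u \<in> {0..1}" for u
  proof -
    have "(b - a) * u \<le> b - a" "0 \<le> (b - a) * u" using that ab by (auto simp: mult_left_le)
    then show ?thesis using ab by auto
  qed
  show "continuous_on {0..1} (\<lambda>u. p (a + (b - a) * u))"
    by (rule continuous_on_compose2[OF reparam_cont[OF p]]) (auto intro!: continuous_intros m)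
  show "\<And>t. t \<in> {0..1} \<Longrightarrow> p (a + (b - a) * t) \<in> {0..1}"
    using m reparam_range[OF p] by fastforce
  show "p (a + (b - a) * s) \<le> p (a + (b - a) * t)" if "0 \<le> s" "s \<le> t" "t \<le> 1" for s t
    using that ab m[of s] m[of t] by (intro reparam_mono[OF p]) (auto simp: mult_left_mono)
qed

text \<open>The piecewise linear homeomorphism of [0,1] sending c to d; it mediates between a path
  and the concatenation of its two halves split at a given time.\<close>
definition bend :: "real \<Rightarrow> real \<Rightarrow> real \<Rightarrow> real" where
  "bend c d t = (if t \<le> c then d * (t / c) else d + (1 - d) * ((t - c) / (1 - c)))"

lemma bend_le:
  assumes "0 < c" "0 < d" "t \<le> c" shows "bend c d t \<le> d"
proof -
  have "t / c \<le> 1" using assms by (simp add: pos_divide_le_eq)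
  then have "d * (t / c) \<le> d" using assms mult_left_mono[of "t / c" 1 d] by simp
  then show ?thesis using assms by (simp add: bend_def)
qed

lemma bend_ge: "c < 1 \<Longrightarrow> d < 1 \<Longrightarrow> c < t \<Longrightarrow> d < bend c d t"
  unfolding bend_def by simp

lemma reparam_bend:
  assumes c: "0 < c" "c < 1" and d: "0 < d" "d < 1"
  shows "reparam (bend c d)" and "bend c d 0 = 0" and "bend c d 1 = 1"
proof -
  show "reparam (bend c d)"
  proof (rule reparamI)
    show "continuous_on {0..1} (bend c d)"
      unfolding bend_def
      by (rule continuous_on_cases_le[where h="\<lambda>t. t", simplified])
         (use c in \<open>auto intro!: continuous_intros\<close>)
    show "bend c d t \<in> {0..1}" if "t \<in> {0..1}" for t
    proof (cases "t \<le> c")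
      case True
      then have "0 \<le> bend c d t" using that c d by (simp add: bend_def)
      then show ?thesis using bend_le[of c d t] True c d by auto
    next
      case False
      have "(t - c) / (1 - c) \<le> 1" using that c by simp
      then have "(1 - d) * ((t - c) / (1 - c)) \<le> 1 - d"
        using d mult_left_mono[of "(t - c) / (1 - c)" 1 "1 - d"] by simp
      then show ?thesis using False that c d by (auto simp: bend_def)
    qed
    show "bend c d s \<le> bend c d t" if "0 \<le> s" "s \<le> t" "t \<le> 1" for s t
    proof -
      consider "t \<le> c" | "s \<le> c" "c < t" | "c < s" using that by linarith
      then show ?thesis
      proof cases
        case 1
        then show ?thesis using that c d by (simp add: bend_def divide_right_mono)
      next
        case 2
        then show ?thesis using bend_le[of c d s] bend_ge[of c d t] c d by linarith
      next
        case 3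
        then show ?thesis using that c d
          by (simp add: bend_def divide_right_mono mult_left_mono)
      qed
    qed
  qed
  show "bend c d 0 = 0" "bend c d 1 = 1" using c by (auto simp: bend_def)
qed

lemma dcat_split:
  assumes t0: "0 < t0" "t0 < 1"
  shows "dcat (\<lambda>u. f (t0 * u)) (\<lambda>u. f (t0 + (1 - t0) * u)) = (\<lambda>t. f (bend (1/2) t0 t))"
proof
  fix t :: real
  have "(t - 1/2) / (1 - 1/2) = 2 * t - 1" by (simp add: field_simps)
  then show "dcat (\<lambda>u. f (t0 * u)) (\<lambda>u. f (t0 + (1 - t0) * u)) t = f (bend (1/2) t0 t)"
    by (simp add: dcat_def bend_def mult.commute)
qed

lemma split_dcat:
  assumes t0: "0 < t0" "t0 < 1" and t: "t \<in> {0..1}"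
  shows "dcat (\<lambda>u. f (t0 * u)) (\<lambda>u. f (t0 + (1 - t0) * u)) (bend t0 (1/2) t) = f t"
proof (cases "t \<le> t0")
  case True
  then have "bend t0 (1/2) t \<le> 1/2" using bend_le[of t0 "1/2" t] t0 by simp
  then show ?thesis using True t0 by (simp add: dcat_def bend_def)
next
  case False
  then have "\<not> bend t0 (1/2) t \<le> 1/2" using bend_ge[of t0 "1/2" t] t0 by simp
  moreover have "t0 + (1 - t0) * (2 * bend t0 (1/2) t - 1) = t"
    using False t0 by (simp add: bend_def field_simps)
  ultimately show ?thesis by (simp add: dcat_def)
qed

context
  fixes T :: "'a topology" and D :: "(real \<Rightarrow> 'a) set"
  assumes dsp: "dspace T D"
begin

lemma D_ext: "g \<in> D \<Longrightarrow> (\<And>t. t \<in> {0..1} \<Longrightarrow> g t = h t) \<Longrightarrow> h \<in> D"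
  using dsp unfolding dspace_def by blast

lemma D_comp: "g \<in> D \<Longrightarrow> reparam \<phi> \<Longrightarrow> (\<lambda>t. g (\<phi> t)) \<in> D"
  using dsp unfolding dspace_def comp_def by blast

lemma D_dcat: "g \<in> D \<Longrightarrow> h \<in> D \<Longrightarrow> g 1 = h 0 \<Longrightarrow> dcat g h \<in> D"
  using dsp unfolding dspace_def by blast

lemma D_path: "g \<in> D \<Longrightarrow> pathin T g"
  using dsp unfolding dspace_def by blast

lemma D_const: "x \<in> topspace T \<Longrightarrow> (\<lambda>_. x) \<in> D"
  using dsp unfolding dspace_def by blast

lemma D_split:
  assumes t0: "0 < t0" "t0 < 1"
    and f1: "(\<lambda>u. f (t0 * u)) \<in> D" and f2: "(\<lambda>u. f (t0 + (1 - t0) * u)) \<in> D"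
  shows "f \<in> D"
proof -
  have "dcat (\<lambda>u. f (t0 * u)) (\<lambda>u. f (t0 + (1 - t0) * u)) \<in> D"
    by (rule D_dcat[OF f1 f2]) simp
  from D_comp[OF this reparam_bend(1)[OF t0, of "1/2"]] have "(\<lambda>t.
      dcat (\<lambda>u. f (t0 * u)) (\<lambda>u. f (t0 + (1 - t0) * u)) (bend t0 (1/2) t)) \<in> D"
    by simp
  then show ?thesis by (rule D_ext) (simp add: split_dcat[OF t0])
qed

lemma D_restrict:
  assumes g: "g \<in> D" and ab: "0 \<le> a" "a \<le> b" "b \<le> 1"
  shows "(\<lambda>u. g (a + (b - a) * u)) \<in> D"
  by (rule D_comp[OF g reparam_restrict[OF reparam_id ab]])

end

definition dihom :: "'a topology \<Rightarrow> (real \<Rightarrow> 'a) set \<Rightarrow> (real \<times> real \<Rightarrow> 'a) \<Rightarrow> bool" where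
  "dihom T D H \<longleftrightarrow> continuous_map (top_of_set ({0..1} \<times> {0..1})) T H
      \<and> (\<forall>p q. reparam p \<and> reparam q \<longrightarrow> (\<lambda>t. H (p t, q t)) \<in> D)"

lemma dhrel_iff: "dhrel T D g g' \<longleftrightarrow> g \<in> D \<and> g' \<in> D \<and>
     (\<exists>H. dihom T D H
      \<and> (\<forall>t\<in>{0..1}. H (t, 0) = g t \<and> H (t, 1) = g' t)
      \<and> (\<forall>s\<in>{0..1}. H (0, s) = g 0 \<and> H (1, s) = g 1))"
  unfolding dhrel_def dihom_def by blast

definition hpaste :: "(real \<times> real \<Rightarrow> 'a) \<Rightarrow> (real \<times> real \<Rightarrow> 'a) \<Rightarrow> real \<times> real \<Rightarrow> 'a" where
  "hpaste H1 H2 = (\<lambda>x. if fst x \<le> 1/2 then H1 (2 * fst x, snd x) else H2 (2 * fst x - 1, snd x))"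

lemma dhrel_ends: "dhrel T D g g' \<Longrightarrow> g' 0 = g 0 \<and> g' 1 = g 1"
  unfolding dhrel_def by (metis atLeastAtMost_iff order_refl zero_le_one)

context
  fixes T :: "'a topology" and D :: "(real \<Rightarrow> 'a) set"
  assumes dsp: "dspace T D"
begin

lemma dihom_const: "g \<in> D \<Longrightarrow> dihom T D (\<lambda>x. g (fst x))"
proof -
  assume g: "g \<in> D"
  have "continuous_map (top_of_set ({0..1} \<times> {0..1})) (top_of_set {0..1::real}) fst"
    by (auto intro: continuous_intros)
  from continuous_map_compose[OF this, of T g]
  have "continuous_map (top_of_set ({0..1} \<times> {0..1::real})) T (g \<circ> fst)"
    using D_path[OF dsp g] by (simp add: pathin_def)
  then show ?thesis
    using D_comp[OF dsp g] unfolding dihom_def comp_def by simp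
qed

lemma hpaste_left:
  assumes H1: "dihom T D H1" and p: "reparam p" and q: "reparam q" and p1: "p 1 \<le> 1/2"
  shows "(\<lambda>t. hpaste H1 H2 (p t, q t)) \<in> D"
proof -
  have "reparam (\<lambda>t. 2 * p t + 0)"
    using reparam_range[OF p] reparam_mono[OF p, of _ 1] p1
    by (intro reparam_affine[OF p]) fastforce+
  then have "(\<lambda>t. H1 (2 * p t + 0, q t)) \<in> D" using H1 q unfolding dihom_def by blast
  then show ?thesis
    by (rule D_ext[OF dsp]) (use reparam_mono[OF p, of _ 1] p1 in \<open>fastforce simp: hpaste_def\<close>)
qed

lemma hpaste_right:
  assumes H2: "dihom T D H2" and p: "reparam p" and q: "reparam q" and p0: "1/2 \<le> p 0"
    and J: "\<And>s. s \<in> {0..1} \<Longrightarrow> H1 (1, s) = H2 (0, s)"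
  shows "(\<lambda>t. hpaste H1 H2 (p t, q t)) \<in> D"
proof -
  have "reparam (\<lambda>t. 2 * p t + -1)"
    using reparam_range[OF p] reparam_mono[OF p, of 0] p0
    by (intro reparam_affine[OF p]) fastforce+
  then have "(\<lambda>t. H2 (2 * p t + -1, q t)) \<in> D" using H2 q unfolding dihom_def by blast
  then show ?thesis
  proof (rule D_ext[OF dsp])
    fix t :: real assume t: "t \<in> {0..1}"
    then have "1/2 \<le> p t" using reparam_mono[OF p, of 0 t] p0 by auto
    then show "H2 (2 * p t + -1, q t) = hpaste H1 H2 (p t, q t)"
    proof (cases "p t = 1/2")
      case True
      then show ?thesis
        using J[of "q t"] reparam_range[OF q, of t] t unfolding hpaste_def True by simp
    qed (simp add: hpaste_def)
  qed
qed

lemma dihom_paste: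
  assumes H1: "dihom T D H1" and H2: "dihom T D H2"
    and J: "\<And>s. s \<in> {0..1} \<Longrightarrow> H1 (1, s) = H2 (0, s)"
  shows "dihom T D (hpaste H1 H2)"
proof -
  let ?S = "{0..1::real} \<times> {0..1::real}"
  have c1: "continuous_map (top_of_set ?S) T H1" and c2: "continuous_map (top_of_set ?S) T H2"
    using H1 H2 unfolding dihom_def by auto
  have cont: "continuous_map (top_of_set ?S) T (hpaste H1 H2)"
    unfolding hpaste_def
  proof (rule continuous_map_cases_le)
    show "continuous_map (top_of_set ?S) euclideanreal fst" by (auto intro: continuous_intros)
    have "continuous_map (top_of_set (?S \<inter> {x. fst x \<le> 1/2})) (top_of_set ?S)
        (\<lambda>x. (2 * fst x, snd x))"
      by (auto intro!: continuous_intros)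
    from continuous_map_compose[OF this c1]
    show "continuous_map
        (subtopology (top_of_set ?S) {x \<in> topspace (top_of_set ?S). fst x \<le> 1/2}) T
        (\<lambda>x. H1 (2 * fst x, snd x))"
      by (simp add: subtopology_subtopology comp_def Int_def)
    have "continuous_map (top_of_set (?S \<inter> {x. 1/2 \<le> fst x})) (top_of_set ?S)
        (\<lambda>x. (2 * fst x - 1, snd x))"
      by (auto intro!: continuous_intros)
    from continuous_map_compose[OF this c2]
    show "continuous_map
        (subtopology (top_of_set ?S) {x \<in> topspace (top_of_set ?S). 1/2 \<le> fst x}) T
        (\<lambda>x. H2 (2 * fst x - 1, snd x))"
      by (simp add: subtopology_subtopology comp_def Int_def)
    show "H1 (2 * fst x, snd x) = H2 (2 * fst x - 1, snd x)"
      if "x \<in> topspace (top_of_set ?S)" "fst x = 1/2" for x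
      using J[of "snd x"] that(1) unfolding that(2) by (auto simp: mem_Times_iff)
  qed simp
  have dir: "(\<lambda>t. hpaste H1 H2 (p t, q t)) \<in> D" if p: "reparam p" and q: "reparam q" for p q
  proof -
    consider "p 1 \<le> 1/2" | "1/2 \<le> p 0" | "p 0 < 1/2" "1/2 < p 1" by linarith
    then show ?thesis
    proof cases
      case 1
      then show ?thesis by (rule hpaste_left[OF H1 p q])
    next
      case 2
      then show ?thesis by (rule hpaste_right[OF H2 p q _ J])
    next
      case 3
      \<comment> \<open>split the path at the time t0 where it crosses the seam\<close>
      obtain t0 where t0: "0 \<le> t0" "t0 \<le> 1" "p t0 = 1/2"
        using IVT'[of p 0 "1/2" 1] 3 reparam_cont[OF p] by auto
      with 3 have t0': "0 < t0" "t0 < 1" by (auto simp: order.order_iff_strict)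
      show ?thesis
      proof (rule D_split[OF dsp t0'])
        show "(\<lambda>u. hpaste H1 H2 (p (t0 * u), q (t0 * u))) \<in> D"
          using hpaste_left[OF H1, of "\<lambda>u. p (t0 * u)" "\<lambda>u. q (t0 * u)"] t0
            reparam_restrict[OF p, of 0 t0] reparam_restrict[OF q, of 0 t0] by simp
        show "(\<lambda>u. hpaste H1 H2 (p (t0 + (1 - t0) * u), q (t0 + (1 - t0) * u))) \<in> D"
          using hpaste_right[OF H2, of "\<lambda>u. p (t0 + (1 - t0) * u)" "\<lambda>u. q (t0 + (1 - t0) * u)"]
            t0 J
            reparam_restrict[OF p, of t0 1] reparam_restrict[OF q, of t0 1] by simp
      qed
    qed
  qed
  show ?thesis unfolding dihom_def using cont dir by blast
qed

lemma dhrel_refl: "g \<in> D \<Longrightarrow> dhrel T D g g"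
  unfolding dhrel_iff using dihom_const by fastforce

text \<open>Elementary homotopies are compatible with concatenation (paste them side by side).\<close>
lemma dhrel_dcat:
  assumes rg: "dhrel T D g g'" and rh: "dhrel T D h h'" and j: "g 1 = h 0"
  shows "dhrel T D (dcat g h) (dcat g' h')"
proof -
  obtain H where g: "g \<in> D" "g' \<in> D" and H: "dihom T D H"
    and H_ends: "\<forall>t\<in>{0..1}. H (t, 0) = g t \<and> H (t, 1) = g' t"
    and H_fix: "\<forall>s\<in>{0..1}. H (0, s) = g 0 \<and> H (1, s) = g 1"
    using rg unfolding dhrel_iff by blast
  obtain K where h: "h \<in> D" "h' \<in> D" and K: "dihom T D K"
    and K_ends: "\<forall>t\<in>{0..1}. K (t, 0) = h t \<and> K (t, 1) = h' t"
    and K_fix: "\<forall>s\<in>{0..1}. K (0, s) = h 0 \<and> K (1, s) = h 1"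
    using rh unfolding dhrel_iff by blast
  have "dihom T D (hpaste H K)"
    by (rule dihom_paste[OF H K]) (use H_fix K_fix j in simp)
  moreover have "dcat g h \<in> D" "dcat g' h' \<in> D"
    using D_dcat[OF dsp] g h j dhrel_ends[OF rg] dhrel_ends[OF rh] by auto
  moreover have "\<forall>t\<in>{0..1}. hpaste H K (t, 0) = dcat g h t \<and> hpaste H K (t, 1) = dcat g' h' t"
    using H_ends K_ends by (auto simp: hpaste_def dcat_def)
  moreover have "\<forall>s\<in>{0..1}. hpaste H K (0, s) = dcat g h 0 \<and> hpaste H K (1, s) = dcat g h 1"
    using H_fix K_fix by (auto simp: hpaste_def dcat_def)
  ultimately show ?thesis unfolding dhrel_iff by blast
qed

end

lemma equivclp_map:
  assumes "equivclp R x y" and "P x"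
    and P_inv: "\<And>u v. R u v \<Longrightarrow> P u \<longleftrightarrow> P v"
    and S_R: "\<And>u v. R u v \<Longrightarrow> P u \<Longrightarrow> S (f u) (f v)"
  shows "equivclp S (f x) (f y)"
proof -
  have "P y \<and> equivclp S (f x) (f y)"
    using assms(1)
  proof (induction rule: equivclp_induct)
    case (step y z)
    then have "P z" using P_inv by blast
    moreover have "S (f y) (f z) \<or> S (f z) (f y)" using step S_R P_inv by blast
    ultimately show ?case using step.IH by (blast intro: equivclp_into_equivclp)
  qed (use \<open>P x\<close> in simp)
  then show ?thesis ..
qed

lemma dheq_D: "dheq T D g g' \<Longrightarrow> g \<in> D \<and> g' \<in> D"
  unfolding dheq_def by auto

lemma dheq_refl: "g \<in> D \<Longrightarrow> dheq T D g g"
  unfolding dheq_def by auto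

lemma dheq_sym: "dheq T D g g' \<Longrightarrow> dheq T D g' g"
  unfolding dheq_def by (auto intro: equivclp_sym)

lemma dheq_trans [trans]: "dheq T D g g' \<Longrightarrow> dheq T D g' g'' \<Longrightarrow> dheq T D g g''"
  unfolding dheq_def by (auto intro: equivclp_trans)

lemma dhrel_dheq: "dhrel T D g g' \<Longrightarrow> dheq T D g g'"
proof -
  assume r: "dhrel T D g g'"
  then have "g \<in> D" "g' \<in> D" unfolding dhrel_def by auto
  with r_into_equivclp[of "dhrel T D", OF r] show ?thesis unfolding dheq_def by blast
qed

lemma dheq_ends:
  assumes "dheq T D g g'" shows "g' 0 = g 0 \<and> g' 1 = g 1"
proof -
  have "equivclp (dhrel T D) g g'" using assms unfolding dheq_def by auto
  then show ?thesis
  proof (induction rule: equivclp_induct)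
    case (step y z)
    then show ?case using dhrel_ends by metis
  qed simp
qed

context
  fixes T :: "'a topology" and D :: "(real \<Rightarrow> 'a) set"
  assumes dsp: "dspace T D"
begin

lemma dheq_dcat:
  assumes g: "dheq T D g g'" and h: "dheq T D h h'" and j: "g 1 = h 0"
  shows "dheq T D (dcat g h) (dcat g' h')"
proof -
  have gD: "g \<in> D" "g' \<in> D" and hD: "h \<in> D" "h' \<in> D" using g h dheq_D by blast+
  have j': "g' 1 = h' 0" using j dheq_ends[OF g] dheq_ends[OF h] by simp
  have "equivclp (dhrel T D) (dcat g h) (dcat g' h)"
  proof (rule equivclp_map[where P="\<lambda>u. u 1 = h 0" and f="\<lambda>u. dcat u h"])
    show "equivclp (dhrel T D) g g'" using g by (simp add: dheq_def)
    show "\<And>u v. dhrel T D u v \<Longrightarrow> u 1 = h 0 \<longleftrightarrow> v 1 = h 0" using dhrel_ends by metis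
    show "\<And>u v. dhrel T D u v \<Longrightarrow> u 1 = h 0 \<Longrightarrow> dhrel T D (dcat u h) (dcat v h)"
      using dhrel_dcat[OF dsp _ dhrel_refl[OF dsp hD(1)]] by blast
  qed (rule j)
  moreover have "equivclp (dhrel T D) (dcat g' h) (dcat g' h')"
  proof (rule equivclp_map[where P="\<lambda>u. g' 1 = u 0" and f="\<lambda>u. dcat g' u"])
    show "equivclp (dhrel T D) h h'" using h by (simp add: dheq_def)
    show "\<And>u v. dhrel T D u v \<Longrightarrow> g' 1 = u 0 \<longleftrightarrow> g' 1 = v 0" using dhrel_ends by metis
    show "\<And>u v. dhrel T D u v \<Longrightarrow> g' 1 = u 0 \<Longrightarrow> dhrel T D (dcat g' u) (dcat g' v)"
      using dhrel_dcat[OF dsp dhrel_refl[OF dsp gD(2)]] by blast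
  qed (use j dheq_ends[OF g] in simp)
  moreover have "dcat g h \<in> D" "dcat g' h' \<in> D"
    using D_dcat[OF dsp] gD hD j j' by auto
  ultimately show ?thesis unfolding dheq_def by (blast intro: equivclp_trans)
qed

lemma dihom_compose:
  assumes g: "g \<in> D"
    and \<Psi>_cont: "continuous_on ({0..1} \<times> {0..1}) \<Psi>"
    and \<Psi>_range: "\<Psi> ` ({0..1} \<times> {0..1}) \<subseteq> {0..1}"
    and \<Psi>_dir: "\<And>p q. reparam p \<Longrightarrow> reparam q \<Longrightarrow> reparam (\<lambda>t. \<Psi> (p t, q t))"
  shows "dihom T D (\<lambda>x. g (\<Psi> x))"
proof -
  have "continuous_map (top_of_set ({0..1} \<times> {0..1})) (top_of_set {0..1}) \<Psi>"
    using \<Psi>_cont \<Psi>_range by auto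
  from continuous_map_compose[OF this, of T g]
  have "continuous_map (top_of_set ({0..1} \<times> {0..1})) T (\<lambda>x. g (\<Psi> x))"
    using D_path[OF dsp g] by (simp add: pathin_def comp_def)
  then show ?thesis unfolding dihom_def using D_comp[OF dsp g \<Psi>_dir] by blast
qed

text \<open>Two comparable endpoint-preserving reparametrizations of a dipath are related by the
  straight-line directed homotopy between them.\<close>
lemma dhrel_reparam:
  assumes g: "g \<in> D" and r1: "reparam \<phi>1" and r2: "reparam \<phi>2"
    and e: "\<phi>1 0 = 0" "\<phi>2 0 = 0" "\<phi>1 1 = 1" "\<phi>2 1 = 1"
    and le: "\<And>t. t \<in> {0..1} \<Longrightarrow> \<phi>1 t \<le> \<phi>2 t"
  shows "dhrel T D (\<lambda>t. g (\<phi>1 t)) (\<lambda>t. g (\<phi>2 t))"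
proof -
  define \<psi> where "\<psi> u v = \<phi>1 u + v * (\<phi>2 u - \<phi>1 u)" for u v
  have rng: "\<psi> u v \<in> {0..1}" if "u \<in> {0..1}" "v \<in> {0..1}" for u v
  proof -
    have d: "0 \<le> \<phi>2 u - \<phi>1 u" using le that by auto
    have "v * (\<phi>2 u - \<phi>1 u) \<le> \<phi>2 u - \<phi>1 u" using that d by (simp add: mult_left_le_one_le)
    moreover have "0 \<le> v * (\<phi>2 u - \<phi>1 u)" using that d by simp
    ultimately show ?thesis using reparam_range[OF r1, of u] reparam_range[OF r2, of u] that
      unfolding \<psi>_def by auto
  qed
  have mon: "\<psi> u v \<le> \<psi> u' v'"
    if "0 \<le> u" "u \<le> u'" "u' \<le> 1" "0 \<le> v" "v \<le> v'" "v' \<le> 1" for u u' v v'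
  proof -
    have a: "\<phi>1 u \<le> \<phi>1 u'" "\<phi>2 u \<le> \<phi>2 u'" using reparam_mono r1 r2 that by auto
    have d: "0 \<le> \<phi>2 u' - \<phi>1 u'" using le that by auto
    have "0 \<le> (1 - v) * (\<phi>1 u' - \<phi>1 u) + v * (\<phi>2 u' - \<phi>2 u)" using a that by simp
    then have "\<psi> u v \<le> \<psi> u' v" unfolding \<psi>_def by (simp add: algebra_simps)
    also have "\<dots> \<le> \<psi> u' v'" unfolding \<psi>_def using d that by (simp add: mult_right_mono)
    finally show ?thesis .
  qed
  have c1: "continuous_on {0..1} \<phi>1" "continuous_on {0..1} \<phi>2" using r1 r2 reparam_cont by auto
  have "dihom T D (\<lambda>x. g (\<psi> (fst x) (snd x)))"
  proof (rule dihom_compose[OF g])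
    have "continuous_on ({0..1} \<times> {0..1}) (\<lambda>x. \<phi>1 (fst x))"
      "continuous_on ({0..1} \<times> {0..1}) (\<lambda>x. \<phi>2 (fst x))"
      by (auto intro!: continuous_on_compose2[OF c1(1)] continuous_on_compose2[OF c1(2)]
          continuous_intros)
    then show "continuous_on ({0..1} \<times> {0..1}) (\<lambda>x. \<psi> (fst x) (snd x))"
      unfolding \<psi>_def by (intro continuous_intros)
    show "(\<lambda>x. \<psi> (fst x) (snd x)) ` ({0..1} \<times> {0..1}) \<subseteq> {0..1}" using rng by auto
    show "reparam (\<lambda>t. \<psi> (fst (p t, q t)) (snd (p t, q t)))"
      if p: "reparam p" and q: "reparam q" for p q
    proof (rule reparamI)
      have "continuous_on {0..1} (\<lambda>t. \<phi>1 (p t))" "continuous_on {0..1} (\<lambda>t. \<phi>2 (p t))"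
        using reparam_range[OF p]
        by (auto intro!: continuous_on_compose2[OF c1(1) reparam_cont[OF p]]
            continuous_on_compose2[OF c1(2) reparam_cont[OF p]])
      then show "continuous_on {0..1} (\<lambda>t. \<psi> (fst (p t, q t)) (snd (p t, q t)))"
        unfolding \<psi>_def using reparam_cont[OF q] by (simp, intro continuous_intros)
      show "\<psi> (fst (p t, q t)) (snd (p t, q t)) \<in> {0..1}" if "t \<in> {0..1}" for t
        using rng reparam_range[OF p] reparam_range[OF q] that by auto
      show "\<psi> (fst (p s, q s)) (snd (p s, q s)) \<le> \<psi> (fst (p t, q t)) (snd (p t, q t))"
        if "0 \<le> s" "s \<le> t" "t \<le> 1" for s t
        using mon reparam_range[OF p] reparam_range[OF q] reparam_mono[OF p] reparam_mono[OF q] that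
        unfolding fst_conv snd_conv by (meson order_trans)
    qed
  qed
  moreover have "(\<lambda>t. g (\<phi>1 t)) \<in> D" "(\<lambda>t. g (\<phi>2 t)) \<in> D" using D_comp[OF dsp g] r1 r2 by auto
  ultimately show ?thesis unfolding dhrel_iff
    by (intro conjI exI[of _ "\<lambda>x. g (\<psi> (fst x) (snd x))"]) (auto simp: \<psi>_def e)
qed

text \<open>Every endpoint-preserving reparametrization of a dipath is dihomotopic to it
  (compare both with the pointwise maximum).\<close>
lemma dheq_reparam:
  assumes g: "g \<in> D" and r: "reparam \<phi>" and e: "\<phi> 0 = 0" "\<phi> 1 = 1"
  shows "dheq T D (\<lambda>t. g (\<phi> t)) g"
proof -
  define \<mu> where "\<mu> t = max (\<phi> t) t" for t
  have rm: "reparam \<mu>"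
  proof (rule reparamI)
    show "continuous_on {0..1} \<mu>"
      unfolding \<mu>_def using reparam_cont[OF r] by (intro continuous_intros)
    show "\<mu> t \<in> {0..1}" if "t \<in> {0..1}" for t
      using reparam_range[OF r, of t] that by (auto simp: \<mu>_def)
    show "\<mu> s \<le> \<mu> t" if "0 \<le> s" "s \<le> t" "t \<le> 1" for s t
      using reparam_mono[OF r, of s t] that by (auto simp: \<mu>_def)
  qed
  have em: "\<mu> 0 = 0" "\<mu> 1 = 1" using e by (auto simp: \<mu>_def)
  have a: "dhrel T D (\<lambda>t. g (\<phi> t)) (\<lambda>t. g (\<mu> t))"
    by (rule dhrel_reparam[OF g r rm e(1) em(1) e(2) em(2)]) (auto simp: \<mu>_def)
  have b: "dhrel T D (\<lambda>t. g ((\<lambda>t. t) t)) (\<lambda>t. g (\<mu> t))"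
    by (rule dhrel_reparam[OF g reparam_id rm _ em(1) _ em(2)]) (auto simp: \<mu>_def)
  show ?thesis using dheq_trans[OF dhrel_dheq[OF a] dheq_sym[OF dhrel_dheq[OF b]]] by simp
qed

lemma dheq_assoc:
  assumes f: "f \<in> D" and g: "g \<in> D" and h: "h \<in> D" and j: "f 1 = g 0" "g 1 = h 0"
  shows "dheq T D (dcat (dcat f g) h) (dcat f (dcat g h))"
proof -
  let ?k = "dcat f (dcat g h)"
  define \<rho> where "\<rho> t = min (2 * t) (min (t + 1/4) ((t + 1) / 2))" for t :: real
  have eq: "dcat (dcat f g) h = (\<lambda>t. ?k (\<rho> t))"
  proof
    fix t :: real
    consider "t \<le> 1/4" | "1/4 < t" "t \<le> 1/2" | "1/2 < t" by linarith
    then show "dcat (dcat f g) h t = ?k (\<rho> t)"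
    proof cases
      case 1
      then have "\<rho> t = 2 * t" by (simp add: \<rho>_def)
      then show ?thesis using 1 by (simp add: dcat_def)
    next
      case 2
      then have "\<rho> t = t + 1/4" by (simp add: \<rho>_def)
      then show ?thesis using 2 by (simp add: dcat_def algebra_simps)
    next
      case 3
      then have "\<rho> t = (t + 1) / 2" by (simp add: \<rho>_def)
      then show ?thesis using 3 by (simp add: dcat_def algebra_simps)
    qed
  qed
  have r: "reparam \<rho>"
  proof (rule reparamI)
    show "continuous_on {0..1} \<rho>" unfolding \<rho>_def by (intro continuous_intros) auto
    show "\<rho> t \<in> {0..1}" if "t \<in> {0..1}" for t using that by (auto simp: \<rho>_def min_def)
    show "\<rho> s \<le> \<rho> t" if "0 \<le> s" "s \<le> t" "t \<le> 1" for s t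
      using that by (auto simp: \<rho>_def min_def)
  qed
  have gh: "dcat g h \<in> D" using D_dcat[OF dsp g h j(2)] .
  have k: "?k \<in> D" using D_dcat[OF dsp f gh] j by (simp add: dcat_def)
  show ?thesis unfolding eq by (rule dheq_reparam[OF k r]) (auto simp: \<rho>_def)
qed

lemma dheq_lunit:
  assumes g: "g \<in> D"
  shows "dheq T D (dcat (\<lambda>_. g 0) g) g"
proof -
  define \<rho> where "\<rho> t = max 0 (2 * t - 1)" for t :: real
  have eq: "dcat (\<lambda>_. g 0) g = (\<lambda>t. g (\<rho> t))"
  proof (rule ext)
    fix t :: real
    show "dcat (\<lambda>_. g 0) g t = g (\<rho> t)"
    proof (cases "2 * t = 1")
      case True
      then have t: "t = 1/2" by simp
      show ?thesis unfolding t by (simp add: dcat_def \<rho>_def)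
    qed (auto simp: dcat_def \<rho>_def max_def)
  qed
  have r: "reparam \<rho>"
  proof (rule reparamI)
    show "continuous_on {0..1} \<rho>" unfolding \<rho>_def by (intro continuous_intros)
  qed (auto simp: \<rho>_def)
  show ?thesis unfolding eq by (rule dheq_reparam[OF g r]) (auto simp: \<rho>_def)
qed

lemma dheq_runit:
  assumes g: "g \<in> D"
  shows "dheq T D (dcat g (\<lambda>_. g 1)) g"
proof -
  define \<rho> where "\<rho> t = min 1 (2 * t)" for t :: real
  have eq: "dcat g (\<lambda>_. g 1) = (\<lambda>t. g (\<rho> t))"
  proof (rule ext)
    fix t :: real
    show "dcat g (\<lambda>_. g 1) t = g (\<rho> t)"
    proof (cases "2 * t = 1")
      case True
      then have t: "t = 1/2" by simp
      show ?thesis unfolding t by (simp add: dcat_def \<rho>_def)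
    qed (auto simp: dcat_def \<rho>_def min_def)
  qed
  have r: "reparam \<rho>"
  proof (rule reparamI)
    show "continuous_on {0..1} \<rho>" unfolding \<rho>_def by (intro continuous_intros)
  qed (auto simp: \<rho>_def)
  show ?thesis unfolding eq by (rule dheq_reparam[OF g r]) (auto simp: \<rho>_def)
qed

lemma dheq_split:
  assumes g: "g \<in> D" and t0: "0 < t0" "t0 < 1"
  shows "dheq T D (dcat (\<lambda>u. g (t0 * u)) (\<lambda>u. g (t0 + (1 - t0) * u))) g"
  unfolding dcat_split[OF t0]
  by (rule dheq_reparam[OF g]) (use reparam_bend[of "1/2" t0] t0 in auto)

end

lemma dcat_0 [simp]: "dcat g h 0 = g 0" and dcat_1 [simp]: "dcat g h 1 = h 1"
  by (simp_all add: dcat_def)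

lemma subdi_D: "g \<in> subdi D X \<Longrightarrow> g \<in> D"
  unfolding subdi_def by auto

lemma subdi_ends: "g \<in> subdi D X \<Longrightarrow> g 0 \<in> X \<and> g 1 \<in> X"
  unfolding subdi_def by auto

lemma dspace_subspace:
  assumes dsp: "dspace T D"
  shows "dspace (subtopology T X) (subdi D X)"
  unfolding dspace_def
proof (intro conjI ballI allI impI)
  fix g assume "g \<in> subdi D X"
  then show "pathin (subtopology T X) g"
    using D_path[OF dsp] by (auto simp: subdi_def pathin_subtopology)
next
  fix x assume "x \<in> topspace (subtopology T X)"
  then show "(\<lambda>_. x) \<in> subdi D X" using D_const[OF dsp] by (auto simp: subdi_def)
next
  fix g \<phi> assume g: "g \<in> subdi D X" and \<phi>: "reparam \<phi>"
  have "(\<lambda>t. g (\<phi> t)) \<in> D" using D_comp[OF dsp subdi_D[OF g] \<phi>] .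
  moreover have "g (\<phi> t) \<in> X" if "t \<in> {0..1}" for t
    using g reparam_range[OF \<phi>, of t] that unfolding subdi_def by auto
  ultimately show "g \<circ> \<phi> \<in> subdi D X" unfolding subdi_def comp_def by blast
next
  fix g h assume g: "g \<in> subdi D X" and h: "h \<in> subdi D X" and j: "g 1 = h 0"
  have "dcat g h \<in> D" using D_dcat[OF dsp subdi_D[OF g] subdi_D[OF h] j] .
  moreover have "dcat g h t \<in> X" if "t \<in> {0..1}" for t
    using g h that unfolding subdi_def dcat_def by (auto simp: image_subset_iff)
  ultimately show "dcat g h \<in> subdi D X" unfolding subdi_def by blast
next
  fix g h :: "real \<Rightarrow> 'a" assume eq: "\<forall>t\<in>{0..1}. g t = h t"
  then have "g \<in> D \<longleftrightarrow> h \<in> D" using D_ext[OF dsp] by metis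
  moreover have "g ` {0..1} = h ` {0..1}" using eq by auto
  ultimately show "g \<in> subdi D X \<longleftrightarrow> h \<in> subdi D X" unfolding subdi_def by simp
qed

lemma dhrel_lift:
  assumes "dhrel (subtopology T X) (subdi D X) g h" shows "dhrel T D g h"
proof -
  obtain H where gh: "g \<in> D" "h \<in> D"
    and H: "continuous_map (top_of_set ({0..1} \<times> {0..1})) (subtopology T X) H"
      "\<forall>p q. reparam p \<and> reparam q \<longrightarrow> (\<lambda>t. H (p t, q t)) \<in> subdi D X"
      "\<forall>t\<in>{0..1}. H (t, 0) = g t \<and> H (t, 1) = h t"
      "\<forall>s\<in>{0..1}. H (0, s) = g 0 \<and> H (1, s) = g 1"
    using assms unfolding dhrel_def by (blast dest: subdi_D)
  have "continuous_map (top_of_set ({0..1} \<times> {0..1})) T H"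
    using H(1) by (rule continuous_map_into_fulltopology)
  moreover have "\<forall>p q. reparam p \<and> reparam q \<longrightarrow> (\<lambda>t. H (p t, q t)) \<in> D"
    using H(2) subdi_D by blast
  ultimately show ?thesis unfolding dhrel_def using gh H(3,4) by blast
qed

lemma dheq_lift:
  assumes "dheq (subtopology T X) (subdi D X) g h" shows "dheq T D g h"
proof -
  have gh: "g \<in> D" "h \<in> D"
    and rel: "equivclp (dhrel (subtopology T X) (subdi D X)) g h"
    using assms unfolding dheq_def by (auto dest: subdi_D)
  have "equivclp (dhrel T D) g h"
    using rel by (rule equivclp_map[where P="\<lambda>_. True" and f="\<lambda>u. u"]) (auto intro: dhrel_lift)
  then show ?thesis using gh unfolding dheq_def by simp
qed

lemma dcls_iff: "h \<in> dcls T D g \<longleftrightarrow> dheq T D g h"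
  unfolding dcls_def by simp

lemma dcls_mem: "g \<in> D \<Longrightarrow> g \<in> dcls T D g"
  unfolding dcls_iff by (rule dheq_refl)

lemma dcls_eq:
  assumes gh: "dheq T D g h" shows "dcls T D g = dcls T D h"
  unfolding dcls_def using dheq_trans[OF gh] dheq_trans[OF dheq_sym[OF gh]] by blast

lemma homs_elem:
  assumes "f \<in> homs T D x y" "e \<in> f"
  shows "e \<in> D \<and> e 0 = x \<and> e 1 = y \<and> f = dcls T D e"
proof -
  obtain g where g: "f = dcls T D g" "g \<in> D" "g 0 = x" "g 1 = y"
    using assms(1) unfolding homs_def by blast
  then have ge: "dheq T D g e" using assms(2) dcls_iff by blast
  then show ?thesis using g dheq_ends[OF ge] dheq_D[OF ge] dcls_eq[OF ge] by simp
qed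

lemma homs_some:
  assumes "f \<in> homs T D x y" shows "(SOME h. h \<in> f) \<in> f"
proof -
  obtain g where "f = dcls T D g" "g \<in> D" using assms unfolding homs_def by blast
  then have "g \<in> f" using dcls_mem by blast
  then show ?thesis by (rule someI[where P="\<lambda>h. h \<in> f"])
qed

lemma cmp_reps:
  assumes dsp: "dspace T D" and f: "f \<in> homs T D x y" and g: "g \<in> homs T D y z"
    and e: "e \<in> f" and e': "e' \<in> g"
  shows "cmp T D g f = dcls T D (dcat e e')"
proof -
  define a b where "a = (SOME h. h \<in> f)" and "b = (SOME h. h \<in> g)"
  have a: "a \<in> D" "a 1 = y" "f = dcls T D a"
    using homs_elem[OF f homs_some[OF f]] by (auto simp: a_def)
  have b: "b \<in> D" "b 0 = y" "g = dcls T D b"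
    using homs_elem[OF g homs_some[OF g]] by (auto simp: b_def)
  have "dheq T D a e" "dheq T D b e'" using a(3) b(3) e e' dcls_iff by blast+
  then have "dheq T D (dcat a b) (dcat e e')" using a b by (intro dheq_dcat[OF dsp]) auto
  then show ?thesis unfolding cmp_def a_def[symmetric] b_def[symmetric] by (rule dcls_eq)
qed

context
  fixes T :: "'a topology" and D :: "(real \<Rightarrow> 'a) set"
    and A :: "'a set" and Po :: "'a \<Rightarrow> 'a"
    and Pm :: "(real \<Rightarrow> 'a) set \<Rightarrow> (real \<Rightarrow> 'a) set" and \<eta> :: "'a \<Rightarrow> (real \<Rightarrow> 'a) set"
  assumes dsp: "dspace T D" and FR: "future_retract T D A Po Pm \<eta>"
begin

lemma future_retract_obj: "x \<in> topspace T \<Longrightarrow> Po x \<in> A"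
proof -
  have "\<forall>x\<in>topspace T. Po x \<in> A" using FR unfolding future_retract_def by (elim conjE)
  then show "x \<in> topspace T \<Longrightarrow> Po x \<in> A" by blast
qed

lemma future_retract_mor:
  "x \<in> topspace T \<Longrightarrow> y \<in> topspace T \<Longrightarrow> f \<in> homs T D x y \<Longrightarrow> Pm f \<in> homs T D (Po x) (Po y)"
proof -
  have "\<forall>x\<in>topspace T. \<forall>y\<in>topspace T. \<forall>f\<in>homs T D x y. Pm f \<in> homs T D (Po x) (Po y)"
    using FR unfolding future_retract_def by (elim conjE)
  then show "x \<in> topspace T \<Longrightarrow> y \<in> topspace T \<Longrightarrow> f \<in> homs T D x y
      \<Longrightarrow> Pm f \<in> homs T D (Po x) (Po y)" by blast
qed

lemma future_retract_unit_homs: "x \<in> topspace T \<Longrightarrow> \<eta> x \<in> homs T D x (Po x)"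
proof -
  have "\<forall>x\<in>topspace T. \<eta> x \<in> homs T D x (Po x)"
    using FR unfolding future_retract_def by (elim conjE)
  then show "x \<in> topspace T \<Longrightarrow> \<eta> x \<in> homs T D x (Po x)" by blast
qed

lemma future_retract_natural:
  "x \<in> topspace T \<Longrightarrow> y \<in> topspace T \<Longrightarrow> f \<in> homs T D x y
     \<Longrightarrow> cmp T D (Pm f) (\<eta> x) = cmp T D (\<eta> y) f"
proof -
  have "\<forall>x\<in>topspace T. \<forall>y\<in>topspace T. \<forall>f\<in>homs T D x y.
      cmp T D (Pm f) (\<eta> x) = cmp T D (\<eta> y) f"
    using FR unfolding future_retract_def by (elim conjE)
  then show "x \<in> topspace T \<Longrightarrow> y \<in> topspace T \<Longrightarrow> f \<in> homs T D x y
      \<Longrightarrow> cmp T D (Pm f) (\<eta> x) = cmp T D (\<eta> y) f" by blast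
qed

lemma future_retract_unit_id: "a \<in> A \<Longrightarrow> \<eta> a = idm T D a"
proof -
  have "\<forall>a\<in>A. \<eta> a = idm T D a" using FR unfolding future_retract_def by (elim conjE)
  then show "a \<in> A \<Longrightarrow> \<eta> a = idm T D a" by blast
qed

text \<open>Naturality of the unit at the class of a dipath c, in terms of dipaths: for any
  representatives e0, e1 of the units at the end points of c there is a dipath delta from
  P(c 0) to P(c 1) with e0 delta dihomotopic to c e1.\<close>
lemma future_retract_square:
  assumes c: "c \<in> D" and e0: "e0 \<in> \<eta> (c 0)" and e1: "e1 \<in> \<eta> (c 1)"
  shows "\<exists>\<delta>\<in>D. \<delta> 0 = Po (c 0) \<and> \<delta> 1 = Po (c 1) \<and> dheq T D (dcat e0 \<delta>) (dcat c e1)"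
proof -
  have cT: "c 0 \<in> topspace T" "c 1 \<in> topspace T"
    using path_image_subset_topspace[OF D_path[OF dsp c]] by auto
  define f where "f = dcls T D c"
  have f: "f \<in> homs T D (c 0) (c 1)" unfolding f_def homs_def using c by blast
  have "Pm f \<in> homs T D (Po (c 0)) (Po (c 1))" using future_retract_mor cT f by blast
  then obtain \<delta> where Pf: "Pm f = dcls T D \<delta>" and \<delta>: "\<delta> \<in> D" "\<delta> 0 = Po (c 0)" "\<delta> 1 = Po (c 1)"
    unfolding homs_def by blast
  have Pf': "Pm f \<in> homs T D (Po (c 0)) (Po (c 1))" and "\<delta> \<in> Pm f"
    using Pf \<delta> dcls_mem unfolding homs_def by blast+
  have \<eta>: "\<eta> (c 0) \<in> homs T D (c 0) (Po (c 0))" "\<eta> (c 1) \<in> homs T D (c 1) (Po (c 1))"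
    using future_retract_unit_homs cT by auto
  have "cmp T D (Pm f) (\<eta> (c 0)) = cmp T D (\<eta> (c 1)) f"
    using future_retract_natural cT f by blast
  then have "dcls T D (dcat e0 \<delta>) = dcls T D (dcat c e1)"
    using cmp_reps[OF dsp \<eta>(1) Pf' e0 \<open>\<delta> \<in> Pm f\<close>] cmp_reps[OF dsp f \<eta>(2) _ e1] dcls_mem[OF c]
    by (simp add: f_def)
  moreover have "dcat e0 \<delta> \<in> D"
    using D_dcat[OF dsp _ \<delta>(1)] homs_elem[OF \<eta>(1) e0] \<delta> by simp
  ultimately have "dheq T D (dcat c e1) (dcat e0 \<delta>)" using dcls_mem dcls_iff by metis
  then show ?thesis using \<delta> dheq_sym by blast
qed

lemma future_retract_fixes:
  assumes a: "a \<in> A" "a \<in> topspace T"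
  shows "Po a = a" and "\<eta> a = dcls T D (\<lambda>_. a)"
proof -
  show \<eta>a: "\<eta> a = dcls T D (\<lambda>_. a)"
    using future_retract_unit_id[OF a(1)] by (simp add: idm_def)
  have "(\<lambda>_. a) \<in> \<eta> a" unfolding \<eta>a by (rule dcls_mem[OF D_const[OF dsp a(2)]])
  then show "Po a = a" using homs_elem[OF future_retract_unit_homs[OF a(2)]] by auto
qed

end

text \<open>Pasting two commuting squares side by side; the telescoping step of the main argument.\<close>
lemma dheq_paste_squares:
  assumes dsp: "dspace T D"
    and in_D: "e0 \<in> D" "\<delta> \<in> D" "L \<in> D" "c \<in> D" "e1 \<in> D" "r \<in> D" "e2 \<in> D"
    and joins: "e0 1 = \<delta> 0" "\<delta> 1 = L 0" "c 1 = e1 0" "e1 1 = L 0" "c 1 = r 0" "r 1 = e2 0"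
    and sq1: "dheq T D (dcat e0 \<delta>) (dcat c e1)"
    and sq2: "dheq T D (dcat e1 L) (dcat r e2)"
    and split: "dheq T D (dcat c r) g"
  shows "dheq T D (dcat e0 (dcat \<delta> L)) (dcat g e2)"
proof -
  note refl = dheq_refl and cat = dheq_dcat[OF dsp] and assoc = dheq_assoc[OF dsp]
  have "dheq T D (dcat e0 (dcat \<delta> L)) (dcat (dcat e0 \<delta>) L)"
    by (rule dheq_sym[OF assoc]) (use in_D joins in auto)
  also have "dheq T D \<dots> (dcat (dcat c e1) L)"
    by (rule cat[OF sq1 refl]) (use in_D joins in auto)
  also have "dheq T D \<dots> (dcat c (dcat e1 L))"
    by (rule assoc) (use in_D joins in auto)
  also have "dheq T D \<dots> (dcat c (dcat r e2))"
    by (rule cat[OF refl sq2]) (use in_D joins in auto)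
  also have "dheq T D \<dots> (dcat (dcat c r) e2)"
    by (rule dheq_sym[OF assoc]) (use in_D joins in auto)
  also have "dheq T D \<dots> (dcat g e2)"
    by (rule cat[OF split refl]) (use in_D joins in auto)
  finally show ?thesis .
qed

lemma future_retract_square_sub:
  assumes dsp: "dspace T D" and X: "X \<subseteq> topspace T"
    and FR: "future_retract (subtopology T X) (subdi D X) A Po Pm \<eta>"
    and c: "c \<in> subdi D X" and e0: "e0 \<in> \<eta> (c 0)" and e1: "e1 \<in> \<eta> (c 1)"
  shows "\<exists>\<delta>\<in>subdi D X. \<delta> 0 = Po (c 0) \<and> \<delta> 1 = Po (c 1) \<and> Po (c 0) \<in> A \<and> Po (c 1) \<in> A
           \<and> dheq T D (dcat e0 \<delta>) (dcat c e1)"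
proof -
  note dsp' = dspace_subspace[OF dsp, of X]
  have "Po (c 0) \<in> A" "Po (c 1) \<in> A"
    using future_retract_obj[OF dsp' FR] subdi_ends[OF c] X by auto
  then show ?thesis
    using future_retract_square[OF dsp' FR c e0 e1] dheq_lift by blast
qed

lemma future_retract_sub_unit_homs:
  assumes dsp: "dspace T D" and X: "X \<subseteq> topspace T"
    and FR: "future_retract (subtopology T X) (subdi D X) A Po Pm \<eta>" and x: "x \<in> X"
  shows "\<eta> x \<in> homs (subtopology T X) (subdi D X) x (Po x)"
  using future_retract_unit_homs[OF dspace_subspace[OF dsp] FR] X x by auto

definition subdivides :: "(real \<Rightarrow> 'a) set \<Rightarrow> (real \<Rightarrow> 'a) \<Rightarrow> nat \<Rightarrow> (nat \<Rightarrow> real) \<Rightarrow> bool" where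
  "subdivides E g n t \<longleftrightarrow> n \<ge> 1 \<and> t 0 = 0 \<and> t n = 1 \<and> (\<forall>i<n. t i < t (Suc i))
      \<and> (\<forall>i<n. (\<lambda>s. g (t i + s * (t (Suc i) - t i))) \<in> E)"

lemma fin_concats_subdivides: "g \<in> fin_concats E \<Longrightarrow> \<exists>n t. subdivides E g n t"
  unfolding fin_concats_def subdivides_def by blast

lemma subdivides_one:
  assumes "subdivides E g 1 t" shows "g \<in> E"
proof -
  have "(\<lambda>s. g (t 0 + s * (t 1 - t 0))) \<in> E" "t 0 = 0" "t 1 = 1"
    using assms unfolding subdivides_def by auto
  then show ?thesis by simp
qed

lemma subdivides_Suc:
  assumes sub: "subdivides E g (Suc n) t" and n: "n \<ge> 1"
  defines "t1 \<equiv> t 1"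
  shows "0 < t1" "t1 < 1" "(\<lambda>u. g (t1 * u)) \<in> E"
    and "subdivides E (\<lambda>u. g (t1 + (1 - t1) * u)) n (\<lambda>i. (t (Suc i) - t1) / (1 - t1))"
proof -
  have t: "t 0 = 0" "t (Suc n) = 1" "\<forall>i<Suc n. t i < t (Suc i)"
    and pieces: "\<forall>i<Suc n. (\<lambda>s. g (t i + s * (t (Suc i) - t i))) \<in> E"
    using sub unfolding subdivides_def by auto
  have t_mono: "t i < t j" if "i < j" "j \<le> Suc n" for i j
    using that
  proof (induction j)
    case (Suc j)
    then show ?case using t(3) by (metis less_Suc_eq Suc_le_lessD Suc_leD order.strict_trans)
  qed simp
  show t1: "0 < t1" "t1 < 1"
    using t_mono[of 0 1] t_mono[of 1 "Suc n"] t n by (auto simp: t1_def)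
  show "(\<lambda>u. g (t1 * u)) \<in> E"
    using pieces t(1) by (force simp: t1_def mult.commute)
  define t' where "t' i = (t (Suc i) - t1) / (1 - t1)" for i
  have piece_eq: "(\<lambda>s. g (t1 + (1 - t1) * (t' i + s * (t' (Suc i) - t' i))))
      = (\<lambda>s. g (t (Suc i) + s * (t (Suc (Suc i)) - t (Suc i))))" for i
  proof -
    have ne: "1 - t1 \<noteq> 0" using t1 by simp
    have "t' (Suc i) - t' i = (t (Suc (Suc i)) - t (Suc i)) / (1 - t1)"
      unfolding t'_def by (simp add: diff_divide_distrib)
    then have "(1 - t1) * (t' i + s * (t' (Suc i) - t' i))
        = (t (Suc i) - t1) + s * (t (Suc (Suc i)) - t (Suc i))" for s
      using ne unfolding t'_def by (simp add: distrib_left mult.left_commute)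
    then have "t1 + (1 - t1) * (t' i + s * (t' (Suc i) - t' i))
        = t (Suc i) + s * (t (Suc (Suc i)) - t (Suc i))" for s
      by simp
    then show ?thesis by simp
  qed
  show "subdivides E (\<lambda>u. g (t1 + (1 - t1) * u)) n t'"
    unfolding subdivides_def
  proof (intro conjI allI impI)
    show "t' 0 = 0" "t' n = 1" using t1 t(2) by (simp_all add: t'_def t1_def)
    show "t' i < t' (Suc i)" if "i < n" for i
      using t(3) that t1 by (simp add: t'_def divide_strict_right_mono)
    show "(\<lambda>s. g (t1 + (1 - t1) * (t' i + s * (t' (Suc i) - t' i)))) \<in> E" if "i < n" for i
      unfolding piece_eq using pieces that by simp
  qed (rule n)
qed

definition ladder :: "(nat \<Rightarrow> (real \<Rightarrow> 'a) \<Rightarrow> 'a \<Rightarrow> 'a \<Rightarrow> bool)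
    \<Rightarrow> nat \<Rightarrow> (nat \<Rightarrow> 'a) \<Rightarrow> (nat \<Rightarrow> nat) \<Rightarrow> (nat \<Rightarrow> real \<Rightarrow> 'a) \<Rightarrow> bool" where
  "ladder S m y k \<delta> \<longleftrightarrow> m \<ge> 1 \<and> (\<forall>i\<in>{1..m}. S (k i) (\<delta> i) (y (i - 1)) (y i))"

definition rungs :: "nat \<Rightarrow> (nat \<Rightarrow> real \<Rightarrow> 'a) \<Rightarrow> real \<Rightarrow> 'a" where
  "rungs m \<delta> = dcatl (map \<delta> [1..<m+1])"

lemma rungs_one: "rungs 1 \<delta> = \<delta> 1"
  by (simp add: rungs_def)

lemma rungs_Suc: "m \<ge> 1 \<Longrightarrow> rungs (Suc m) \<delta> = dcat (\<delta> 1) (rungs m (\<lambda>i. \<delta> (Suc i)))"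
proof -
  assume m: "m \<ge> 1"
  have "[1..<Suc m + 1] = 1 # map Suc [1..<m+1]" by (simp add: upt_conv_Cons map_Suc_upt)
  moreover obtain d ds where "map (\<lambda>i. \<delta> (Suc i)) [1..<m+1] = d # ds"
    using m by (cases "map (\<lambda>i. \<delta> (Suc i)) [1..<m+1]") auto
  ultimately show ?thesis unfolding rungs_def by (simp add: comp_def)
qed

lemma ladder_one: "S k0 \<delta>0 u v \<Longrightarrow> ladder S 1 (\<lambda>i. if i = 0 then u else v) (\<lambda>_. k0) (\<lambda>_. \<delta>0)"
  unfolding ladder_def by auto

lemma ladder_cons:
  assumes L: "ladder S m y k \<delta>" and S0: "S k0 \<delta>0 u (y 0)"
  shows "ladder S (Suc m) (\<lambda>i. if i = 0 then u else y (i - 1))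
           (\<lambda>i. if i = 1 then k0 else k (i - 1)) (\<lambda>i. if i = 1 then \<delta>0 else \<delta> (i - 1))"
  unfolding ladder_def
proof (intro conjI ballI)
  fix i assume i: "i \<in> {1..Suc m}"
  show "S (if i = 1 then k0 else k (i - 1)) (if i = 1 then \<delta>0 else \<delta> (i - 1))
          (if i - 1 = 0 then u else y (i - 1 - 1)) (if i = 0 then u else y (i - 1))"
  proof (cases "i = 1")
    case False
    then obtain j where "i = Suc j" "j \<in> {1..m}" using i by (cases i) auto
    then show ?thesis using L unfolding ladder_def by auto
  qed (use S0 in simp)
qed simp

lemma rungs_cons:
  assumes m: "m \<ge> 1"
  shows "rungs (Suc m) (\<lambda>i. if i = 1 then \<delta>0 else \<delta> (i - 1)) = dcat \<delta>0 (rungs m \<delta>)"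
proof -
  let ?d = "\<lambda>i. if i = 1 then \<delta>0 else \<delta> (i - 1)"
  have "map (\<lambda>i. ?d (Suc i)) [1..<m+1] = map \<delta> [1..<m+1]" by (rule map_cong) auto
  then have "rungs m (\<lambda>i. ?d (Suc i)) = rungs m \<delta>" by (simp only: rungs_def)
  then show ?thesis using rungs_Suc[OF m, of ?d] by simp
qed

lemma ladder_tail:
  assumes L: "ladder S (Suc m) y k \<delta>" and m: "m \<ge> 1"
  shows "ladder S m (\<lambda>i. y (Suc i)) (\<lambda>i. k (Suc i)) (\<lambda>i. \<delta> (Suc i))"
    and "S (k 1) (\<delta> 1) (y 0) (y 1)"
proof -
  have steps: "S (k i) (\<delta> i) (y (i - 1)) (y i)" if "i \<in> {1..Suc m}" for i
    using L that unfolding ladder_def by blast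
  show "S (k 1) (\<delta> 1) (y 0) (y 1)" using steps[of 1] by simp
  show "ladder S m (\<lambda>i. y (Suc i)) (\<lambda>i. k (Suc i)) (\<lambda>i. \<delta> (Suc i))"
    unfolding ladder_def using m steps[of "Suc _"] by fastforce
qed

lemma ladder_rungs:
  assumes dsp: "dspace T D" and S: "\<And>k \<delta> u v. S k \<delta> u v \<Longrightarrow> \<delta> \<in> D \<and> \<delta> 0 = u \<and> \<delta> 1 = v"
  shows "ladder S m y k \<delta> \<Longrightarrow> rungs m \<delta> \<in> D \<and> rungs m \<delta> 0 = y 0 \<and> rungs m \<delta> 1 = y m"
proof (induction m arbitrary: y k \<delta>)
  case 0
  then show ?case by (simp add: ladder_def)
next
  case (Suc m)
  show ?case
  proof (cases "m = 0")
    case True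
    then show ?thesis using Suc.prems S by (auto simp: ladder_def rungs_def)
  next
    case False
    then have m: "m \<ge> 1" by simp
    note tail = ladder_tail[OF Suc.prems m]
    have "rungs m (\<lambda>i. \<delta> (Suc i)) \<in> D \<and> rungs m (\<lambda>i. \<delta> (Suc i)) 0 = y 1
        \<and> rungs m (\<lambda>i. \<delta> (Suc i)) 1 = y (Suc m)"
      using Suc.IH[OF tail(1)] by simp
    then show ?thesis
      using S[OF tail(2)] D_dcat[OF dsp] by (simp add: rungs_Suc[OF m])
  qed
qed

locale van_kampen_retracts =
  fixes T :: "'a topology" and D :: "(real \<Rightarrow> 'a) set"
    and X1 X2 A1 A2 :: "'a set"
    and P0o P1o P2o :: "'a \<Rightarrow> 'a"
    and P0m P1m P2m :: "(real \<Rightarrow> 'a) set \<Rightarrow> (real \<Rightarrow> 'a) set"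
    and \<eta>0 \<eta>1 \<eta>2 :: "'a \<Rightarrow> (real \<Rightarrow> 'a) set"
  assumes dsp: "dspace T D"
    and X1sub: "X1 \<subseteq> topspace T" and X2sub: "X2 \<subseteq> topspace T"
    and X_cover: "topspace T \<subseteq> X1 \<union> X2"
    and A1sub: "A1 \<subseteq> X1" and A2sub: "A2 \<subseteq> X2"
    and P0: "future_retract (subtopology T (X1 \<inter> X2)) (subdi D (X1 \<inter> X2)) (A1 \<inter> A2) P0o P0m \<eta>0"
    and P1: "future_retract (subtopology T X1) (subdi D X1) A1 P1o P1m \<eta>1"
    and P2: "future_retract (subtopology T X2) (subdi D X2) A2 P2o P2m \<eta>2"
    and obj1: "\<forall>x\<in>X1 \<inter> X2. P1o x = P0o x"
    and obj2: "\<forall>x\<in>X1 \<inter> X2. P2o x = P0o x"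
    and unit1: "\<forall>x\<in>X1 \<inter> X2. incl (subtopology T X1) (subdi D X1) (\<eta>0 x) = \<eta>1 x"
    and unit2: "\<forall>x\<in>X1 \<inter> X2. incl (subtopology T X2) (subdi D X2) (\<eta>0 x) = \<eta>2 x"
begin

text \<open>The retraction on objects, glued from P1 and P2 (they agree on X0), and a chosen dipath
  E x representing the unit at x; on X0 it is taken from the unit of P0.\<close>
definition Pk :: "'a \<Rightarrow> 'a" where
  "Pk x = (if x \<in> X1 then P1o x else P2o x)"

definition E :: "'a \<Rightarrow> real \<Rightarrow> 'a" where
  "E x = (if x \<in> X1 \<inter> X2 then SOME e. e \<in> \<eta>0 x
          else if x \<in> X1 then SOME e. e \<in> \<eta>1 x else SOME e. e \<in> \<eta>2 x)"

lemma Pk1: "x \<in> X1 \<Longrightarrow> Pk x = P1o x" and Pk2: "x \<in> X2 \<Longrightarrow> Pk x = P2o x"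
  using obj1 obj2 by (auto simp: Pk_def)

lemma E_X0:
  assumes x: "x \<in> X1 \<inter> X2" shows "E x \<in> subdi D (X1 \<inter> X2)"
proof -
  have "X1 \<inter> X2 \<subseteq> topspace T" using X1sub by blast
  from future_retract_sub_unit_homs[OF dsp this P0 x]
  have h0: "\<eta>0 x \<in> homs (subtopology T (X1 \<inter> X2)) (subdi D (X1 \<inter> X2)) x (P0o x)" .
  have "E x = (SOME e. e \<in> \<eta>0 x)" using x by (simp add: E_def)
  then have "E x \<in> \<eta>0 x" using homs_some[OF h0] by simp
  then show ?thesis using homs_elem[OF h0] by blast
qed

text \<open>By compatibility of the units, E x represents the unit of every retract whose domain
  contains x.\<close>
lemma E_unit_incl:
  assumes x: "x \<in> X1 \<inter> X2" and sub: "X1 \<inter> X2 \<subseteq> X"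
    and unit: "incl (subtopology T X) (subdi D X) (\<eta>0 x) = \<eta> x"
  shows "E x \<in> \<eta> x"
proof -
  have "E x \<in> subdi D X" using E_X0[OF x] sub by (auto simp: subdi_def)
  moreover have "\<eta> x = dcls (subtopology T X) (subdi D X) (SOME e. e \<in> \<eta>0 x)"
    using unit by (simp add: incl_def)
  moreover have "(SOME e. e \<in> \<eta>0 x) = E x" using x by (simp add: E_def)
  ultimately show ?thesis using dcls_mem by metis
qed

lemma E_unit1:
  assumes x: "x \<in> X1" shows "E x \<in> \<eta>1 x"
proof (cases "x \<in> X2")
  case True
  then show ?thesis using E_unit_incl[OF _ Int_lower1] unit1 x by blast
next
  case False
  have "E x = (SOME e. e \<in> \<eta>1 x)" using x False by (simp add: E_def)
  then show ?thesis using homs_some[OF future_retract_sub_unit_homs[OF dsp X1sub P1 x]] by simp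
qed

lemma E_unit2:
  assumes x: "x \<in> X2" shows "E x \<in> \<eta>2 x"
proof (cases "x \<in> X1")
  case True
  then show ?thesis using E_unit_incl[OF _ Int_lower2] unit2 x by blast
next
  case False
  have "E x = (SOME e. e \<in> \<eta>2 x)" using x False by (simp add: E_def)
  then show ?thesis using homs_some[OF future_retract_sub_unit_homs[OF dsp X2sub P2 x]] by simp
qed

lemma E_path:
  assumes x: "x \<in> X1 \<union> X2" shows "E x \<in> D" "E x 0 = x" "E x 1 = Pk x"
proof -
  have "(E x \<in> subdi D X1 \<or> E x \<in> subdi D X2) \<and> E x 0 = x \<and> E x 1 = Pk x"
  proof (cases "x \<in> X1")
    case True
    then show ?thesis
      using homs_elem[OF future_retract_sub_unit_homs[OF dsp X1sub P1 True] E_unit1[OF True]] Pk1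
      by simp
  next
    case False
    then have x2: "x \<in> X2" using x by blast
    then show ?thesis
      using homs_elem[OF future_retract_sub_unit_homs[OF dsp X2sub P2 x2] E_unit2[OF x2]] Pk2
      by simp
  qed
  then show "E x \<in> D" "E x 0 = x" "E x 1 = Pk x" using subdi_D by blast+
qed

lemma E_on_A:
  assumes a: "a \<in> A1 \<union> A2" shows "Pk a = a" and "dheq T D (\<lambda>_. a) (E a)"
proof -
  have "Pk a = a \<and> dheq T D (\<lambda>_. a) (E a)"
  proof (cases "a \<in> A1")
    case True
    then have "a \<in> topspace (subtopology T X1)" using A1sub X1sub by auto
    note fix1 = future_retract_fixes[OF dspace_subspace[OF dsp] P1 True this]
    have "E a \<in> dcls (subtopology T X1) (subdi D X1) (\<lambda>_. a)"
      using E_unit1 True A1sub fix1(2) by auto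
    then have "dheq T D (\<lambda>_. a) (E a)" unfolding dcls_iff by (rule dheq_lift)
    moreover have "Pk a = a" using fix1(1) Pk1 True A1sub by auto
    ultimately show ?thesis by blast
  next
    case False
    then have a2: "a \<in> A2" using a by blast
    then have "a \<in> topspace (subtopology T X2)" using A2sub X2sub by auto
    note fix2 = future_retract_fixes[OF dspace_subspace[OF dsp] P2 a2 this]
    have "E a \<in> dcls (subtopology T X2) (subdi D X2) (\<lambda>_. a)"
      using E_unit2 a2 A2sub fix2(2) by auto
    then have "dheq T D (\<lambda>_. a) (E a)" unfolding dcls_iff by (rule dheq_lift)
    moreover have "Pk a = a" using fix2(1) Pk2 a2 A2sub by auto
    ultimately show ?thesis by blast
  qed
  then show "Pk a = a" "dheq T D (\<lambda>_. a) (E a)" by auto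
qed

definition local_morphism :: "nat \<Rightarrow> (real \<Rightarrow> 'a) \<Rightarrow> 'a \<Rightarrow> 'a \<Rightarrow> bool" where
  "local_morphism k \<delta> u v \<longleftrightarrow> k \<in> {1, 2}
      \<and> u \<in> (if k = 1 then A1 else A2) \<and> v \<in> (if k = 1 then A1 else A2)
      \<and> \<delta> \<in> subdi D (if k = 1 then X1 else X2) \<and> \<delta> 0 = u \<and> \<delta> 1 = v"

lemma local_morphism_path: "local_morphism k \<delta> u v \<Longrightarrow> \<delta> \<in> D \<and> \<delta> 0 = u \<and> \<delta> 1 = v"
  unfolding local_morphism_def using subdi_D by metis

lemma piece_square:
  assumes c: "c \<in> subdi D X1 \<union> subdi D X2"
  shows "\<exists>k \<delta>. local_morphism k \<delta> (Pk (c 0)) (Pk (c 1))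
           \<and> dheq T D (dcat (E (c 0)) \<delta>) (dcat c (E (c 1)))"
proof (cases "c \<in> subdi D X1")
  case True
  note ends = subdi_ends[OF True]
  obtain \<delta> where "\<delta> \<in> subdi D X1" "\<delta> 0 = P1o (c 0)" "\<delta> 1 = P1o (c 1)"
      "P1o (c 0) \<in> A1" "P1o (c 1) \<in> A1" "dheq T D (dcat (E (c 0)) \<delta>) (dcat c (E (c 1)))"
    using future_retract_square_sub[OF dsp X1sub P1 True E_unit1 E_unit1] ends by blast
  then have "local_morphism 1 \<delta> (Pk (c 0)) (Pk (c 1))
      \<and> dheq T D (dcat (E (c 0)) \<delta>) (dcat c (E (c 1)))"
    using ends Pk1 by (simp add: local_morphism_def)
  then show ?thesis by blast
next
  case False
  then have c2: "c \<in> subdi D X2" using c by blast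
  note ends = subdi_ends[OF c2]
  obtain \<delta> where "\<delta> \<in> subdi D X2" "\<delta> 0 = P2o (c 0)" "\<delta> 1 = P2o (c 1)"
      "P2o (c 0) \<in> A2" "P2o (c 1) \<in> A2" "dheq T D (dcat (E (c 0)) \<delta>) (dcat c (E (c 1)))"
    using future_retract_square_sub[OF dsp X2sub P2 c2 E_unit2 E_unit2] ends by blast
  then have "local_morphism 2 \<delta> (Pk (c 0)) (Pk (c 1))
      \<and> dheq T D (dcat (E (c 0)) \<delta>) (dcat c (E (c 1)))"
    using ends Pk2 by (simp add: local_morphism_def)
  then show ?thesis by blast
qed

lemma endpoints_in_X: "g \<in> D \<Longrightarrow> g 0 \<in> X1 \<union> X2 \<and> g 1 \<in> X1 \<union> X2"
  using path_image_subset_topspace[OF D_path[OF dsp]] X_cover by fastforce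

lemma ladder_points:
  assumes "ladder local_morphism m y k \<delta>" shows "\<forall>i\<le>m. y i \<in> A1 \<union> A2"
proof (intro allI impI)
  fix i assume i: "i \<le> m"
  define j where "j = max i 1"
  have "j \<in> {1..m}" "i = j - 1 \<or> i = j"
    using i assms unfolding j_def ladder_def by auto
  then have "local_morphism (k j) (\<delta> j) (y (j - 1)) (y j)"
    using assms unfolding ladder_def by blast
  then have "y (j - 1) \<in> A1 \<union> A2 \<and> y j \<in> A1 \<union> A2"
    unfolding local_morphism_def by (auto split: if_splits)
  then show "y i \<in> A1 \<union> A2" using \<open>i = j - 1 \<or> i = j\<close> by auto
qed

definition telescope :: "(real \<Rightarrow> 'a) \<Rightarrow> nat \<Rightarrow> (nat \<Rightarrow> 'a) \<Rightarrow> (nat \<Rightarrow> nat)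
    \<Rightarrow> (nat \<Rightarrow> real \<Rightarrow> 'a) \<Rightarrow> bool" where
  "telescope g m y k \<delta> \<longleftrightarrow> ladder local_morphism m y k \<delta>
      \<and> y 0 = Pk (g 0) \<and> y m = Pk (g 1)
      \<and> dheq T D (dcat (E (g 0)) (rungs m \<delta>)) (dcat g (E (g 1)))"

lemma telescope_piece:
  assumes c: "c \<in> subdi D X1 \<union> subdi D X2" shows "\<exists>m y k \<delta>. telescope c m y k \<delta>"
proof -
  obtain k \<delta> where "local_morphism k \<delta> (Pk (c 0)) (Pk (c 1))"
      and "dheq T D (dcat (E (c 0)) \<delta>) (dcat c (E (c 1)))"
    using piece_square[OF c] by blast
  then have "telescope c 1 (\<lambda>i. if i = 0 then Pk (c 0) else Pk (c 1)) (\<lambda>_. k) (\<lambda>_. \<delta>)"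
    unfolding telescope_def rungs_one by (intro conjI ladder_one) simp_all
  then show ?thesis by blast
qed

text \<open>Pasting the square of a first piece c onto the telescope of the rest r.\<close>
lemma telescope_cons:
  assumes tel: "telescope r m y k \<delta>" and c: "c \<in> subdi D X1 \<union> subdi D X2" and r: "r \<in> D"
    and join: "c 1 = r 0" and split: "dheq T D (dcat c r) g" and g: "g 0 = c 0" "g 1 = r 1"
  shows "\<exists>m y k \<delta>. telescope g m y k \<delta>"
proof -
  obtain k0 \<delta>0 where step: "local_morphism k0 \<delta>0 (Pk (c 0)) (Pk (c 1))"
      and sq: "dheq T D (dcat (E (c 0)) \<delta>0) (dcat c (E (c 1)))"
    using piece_square[OF c] by blast
  have L: "ladder local_morphism m y k \<delta>" and y: "y 0 = Pk (r 0)" "y m = Pk (r 1)"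
    and sq': "dheq T D (dcat (E (r 0)) (rungs m \<delta>)) (dcat r (E (r 1)))"
    using tel unfolding telescope_def by auto
  have m: "m \<ge> 1" using L unfolding ladder_def by simp
  have cD: "c \<in> D" using c subdi_D by blast
  have rungs: "rungs m \<delta> \<in> D" "rungs m \<delta> 0 = y 0"
    using ladder_rungs[OF dsp local_morphism_path L] by auto
  note E0 = E_path[OF conjunct1[OF endpoints_in_X[OF cD]]]
    and E1 = E_path[OF conjunct2[OF endpoints_in_X[OF cD]]]
    and E2 = E_path[OF conjunct2[OF endpoints_in_X[OF r]]]
  have "dheq T D (dcat (E (c 0)) (dcat \<delta>0 (rungs m \<delta>))) (dcat g (E (r 1)))"
    by (rule dheq_paste_squares[OF dsp _ _ _ cD _ r _ _ _ _ _ _ _ sq _ split])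
       (use E0 E1 E2 rungs local_morphism_path[OF step] y join sq' in auto)
  moreover have "ladder local_morphism (Suc m) (\<lambda>i. if i = 0 then Pk (c 0) else y (i - 1))
           (\<lambda>i. if i = 1 then k0 else k (i - 1)) (\<lambda>i. if i = 1 then \<delta>0 else \<delta> (i - 1))"
    by (rule ladder_cons[OF L]) (use step y join in simp)
  ultimately have "telescope g (Suc m) (\<lambda>i. if i = 0 then Pk (c 0) else y (i - 1))
           (\<lambda>i. if i = 1 then k0 else k (i - 1)) (\<lambda>i. if i = 1 then \<delta>0 else \<delta> (i - 1))"
    unfolding telescope_def rungs_cons[OF m] using g y m by simp
  then show ?thesis by blast
qed

lemma telescope_exists:
  "subdivides (subdi D X1 \<union> subdi D X2) g n t \<Longrightarrow> g \<in> D \<Longrightarrow> \<exists>m y k \<delta>. telescope g m y k \<delta>"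
proof (induction n arbitrary: g t)
  case 0
  then show ?case by (simp add: subdivides_def)
next
  case (Suc n)
  show ?case
  proof (cases "n = 0")
    case True
    then have "subdivides (subdi D X1 \<union> subdi D X2) g 1 t" using Suc.prems(1) by simp
    then show ?thesis by (rule telescope_piece[OF subdivides_one])
  next
    case False
    then have n: "n \<ge> 1" by simp
    note first = subdivides_Suc[OF Suc.prems(1) n]
    have rest: "(\<lambda>u. g (t 1 + (1 - t 1) * u)) \<in> D"
      using D_restrict[OF dsp Suc.prems(2), of "t 1" 1] first(1,2) by simp
    obtain m y k \<delta> where "telescope (\<lambda>u. g (t 1 + (1 - t 1) * u)) m y k \<delta>"
      using Suc.IH[OF first(4) rest] by blast
    then show ?thesis
      by (rule telescope_cons[OF _ first(3) rest])
         (use dheq_split[OF dsp Suc.prems(2) first(1,2)] in simp_all)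
  qed
qed

text \<open>Between points of A the unit dipaths cancel and the ladder itself is dihomotopic to g.\<close>
lemma telescope_between_A:
  assumes tel: "telescope g m y k \<delta>" and g: "g \<in> D"
    and a: "g 0 \<in> A1 \<union> A2" and a': "g 1 \<in> A1 \<union> A2"
  shows "y 0 = g 0" "y m = g 1" "dheq T D g (rungs m \<delta>)"
proof -
  have L: "ladder local_morphism m y k \<delta>" and y: "y 0 = Pk (g 0)" "y m = Pk (g 1)"
    and sq: "dheq T D (dcat (E (g 0)) (rungs m \<delta>)) (dcat g (E (g 1)))"
    using tel unfolding telescope_def by auto
  show y0: "y 0 = g 0" and ym: "y m = g 1" using y E_on_A(1)[OF a] E_on_A(1)[OF a'] by auto
  have R: "rungs m \<delta> \<in> D" "rungs m \<delta> 0 = g 0" "rungs m \<delta> 1 = g 1"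
    using ladder_rungs[OF dsp local_morphism_path L] y0 ym by auto
  note u0 = E_on_A(2)[OF a] and u1 = E_on_A(2)[OF a']
  have "dheq T D (rungs m \<delta>) (dcat (\<lambda>_. g 0) (rungs m \<delta>))"
    using dheq_sym[OF dheq_lunit[OF dsp R(1)]] R(2) by simp
  also have "dheq T D \<dots> (dcat (E (g 0)) (rungs m \<delta>))"
    by (rule dheq_dcat[OF dsp u0 dheq_refl[OF R(1)]]) (use R in simp)
  also have "dheq T D \<dots> (dcat g (E (g 1)))" by (rule sq)
  also have "dheq T D \<dots> (dcat g (\<lambda>_. g 1))"
    by (rule dheq_dcat[OF dsp dheq_refl[OF g] dheq_sym[OF u1]]) (use dheq_ends[OF u1] in simp)
  also have "dheq T D \<dots> g" by (rule dheq_runit[OF dsp g])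
  finally show "dheq T D g (rungs m \<delta>)" by (rule dheq_sym)
qed

end

theorem lemma4p1:
  fixes T :: "'a topology" and D :: "(real \<Rightarrow> 'a) set"
    and X1 X2 A1 A2 :: "'a set"
    and P0o P1o P2o :: "'a \<Rightarrow> 'a"
    and P0m P1m P2m :: "(real \<Rightarrow> 'a) set \<Rightarrow> (real \<Rightarrow> 'a) set"
    and \<eta>0 \<eta>1 \<eta>2 :: "'a \<Rightarrow> (real \<Rightarrow> 'a) set"
    and a a' :: 'a and \<gamma> :: "real \<Rightarrow> 'a"
  assumes dsp: "dspace T D"
    and X1sub: "X1 \<subseteq> topspace T" and X2sub: "X2 \<subseteq> topspace T"
    and cover: "topspace T = (T interior_of X1) \<union> (T interior_of X2)"
    and gen: "D = fin_concats (subdi D X1 \<union> subdi D X2)"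
    and A1sub: "A1 \<subseteq> X1" and A2sub: "A2 \<subseteq> X2"
    and Acover: "A1 \<union> A2 = (subtopology T (A1 \<union> A2) interior_of A1)
                           \<union> (subtopology T (A1 \<union> A2) interior_of A2)"
    and P0: "future_retract (subtopology T (X1 \<inter> X2)) (subdi D (X1 \<inter> X2)) (A1 \<inter> A2) P0o P0m \<eta>0"
    and P1: "future_retract (subtopology T X1) (subdi D X1) A1 P1o P1m \<eta>1"
    and P2: "future_retract (subtopology T X2) (subdi D X2) A2 P2o P2m \<eta>2"
    and obj1: "\<forall>x\<in>X1 \<inter> X2. P1o x = P0o x"
    and obj2: "\<forall>x\<in>X1 \<inter> X2. P2o x = P0o x"
    and mor1: "\<forall>x\<in>X1 \<inter> X2. \<forall>y\<in>X1 \<inter> X2.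
                 \<forall>f\<in>homs (subtopology T (X1 \<inter> X2)) (subdi D (X1 \<inter> X2)) x y.
                   P1m (incl (subtopology T X1) (subdi D X1) f)
                   = incl (subtopology T X1) (subdi D X1) (P0m f)"
    and mor2: "\<forall>x\<in>X1 \<inter> X2. \<forall>y\<in>X1 \<inter> X2.
                 \<forall>f\<in>homs (subtopology T (X1 \<inter> X2)) (subdi D (X1 \<inter> X2)) x y.
                   P2m (incl (subtopology T X2) (subdi D X2) f)
                   = incl (subtopology T X2) (subdi D X2) (P0m f)"
    and unit1: "\<forall>x\<in>X1 \<inter> X2. incl (subtopology T X1) (subdi D X1) (\<eta>0 x) = \<eta>1 x"
    and unit2: "\<forall>x\<in>X1 \<inter> X2. incl (subtopology T X2) (subdi D X2) (\<eta>0 x) = \<eta>2 x"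
    and aA: "a \<in> A1 \<union> A2" and a'A: "a' \<in> A1 \<union> A2"
    and \<gamma>D: "\<gamma> \<in> D" and \<gamma>0: "\<gamma> 0 = a" and \<gamma>1: "\<gamma> 1 = a'"
  shows "\<exists>n::nat. \<exists>y::nat \<Rightarrow> 'a. \<exists>k::nat \<Rightarrow> nat. \<exists>\<delta>::nat \<Rightarrow> real \<Rightarrow> 'a.
           n \<ge> 1 \<and> y 0 = a \<and> y n = a' \<and> (\<forall>i\<le>n. y i \<in> A1 \<union> A2)
         \<and> (\<forall>i\<in>{1..n}. k i \<in> {1, 2}
              \<and> y (i - 1) \<in> (if k i = 1 then A1 else A2)
              \<and> y i \<in> (if k i = 1 then A1 else A2)
              \<and> \<delta> i \<in> subdi D (if k i = 1 then X1 else X2)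
              \<and> \<delta> i 0 = y (i - 1) \<and> \<delta> i 1 = y i)
         \<and> dheq T D \<gamma> (dcatl (map \<delta> [1..<n+1]))"
proof -
  have X_cover: "topspace T \<subseteq> X1 \<union> X2"
    by (subst cover) (rule Un_mono[OF interior_of_subset interior_of_subset])
  interpret van_kampen_retracts T D X1 X2 A1 A2 P0o P1o P2o P0m P1m P2m \<eta>0 \<eta>1 \<eta>2
    by (rule van_kampen_retracts.intro[OF dsp X1sub X2sub X_cover A1sub A2sub P0 P1 P2
          obj1 obj2 unit1 unit2])
  have "\<gamma> \<in> fin_concats (subdi D X1 \<union> subdi D X2)" using \<gamma>D gen by simp
  then obtain n t where "subdivides (subdi D X1 \<union> subdi D X2) \<gamma> n t"
    by (blast dest: fin_concats_subdivides)
  from telescope_exists[OF this \<gamma>D] obtain m y k \<delta> where tel: "telescope \<gamma> m y k \<delta>"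
    by blast
  then have L: "ladder local_morphism m y k \<delta>" unfolding telescope_def by blast
  have "y 0 = a" "y m = a'" "dheq T D \<gamma> (rungs m \<delta>)"
    using telescope_between_A[OF tel \<gamma>D] aA a'A \<gamma>0 \<gamma>1 by auto
  with L ladder_points[OF L] show ?thesis
    unfolding ladder_def local_morphism_def rungs_def
    by (intro exI[of _ m] exI[of _ y] exI[of _ k] exI[of _ \<delta>]) simp
qed

end
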